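(* Let $X,Y$ be arbitrary real-valued random variables on an atomless probability space (no integrability assumed). Let $(X^{\rm co},Y^{\rm co})$ be a comonotonic version of $(X,Y)$ and $(X^{\rm ct},Y^{\rm ct})$ a counter-monotonic version of $(X,Y)$. Then $$X^{\rm ct}+Y^{\rm ct}\le_{\rm cx} X+Y\le_{\rm cx} X^{\rm co}+Y^{\rm co}.$$
   Context: An expectation $\mathbb E[Z]$ is well-defined if $\mathbb E[\max\{Z,0\}]<\infty$ or $\mathbb E[\max\{-Z,0\}]<\infty$. We write $U\le_{\rm cx}V$ if $\mathbb E[u(U)]\le\mathbb E[u(V)]$ for all convex $u:\mathbb R\to\mathbb R$ such that both expectations are well-defined. A pair $(X,Y)$ is comonotonic if $X=f(Z)$ and $Y=g(Z)$ a.s. for some random variable $Z$ and increasing functions $f,g$; it is counter-monotonic if $(X,-Y)$ is comonotonic. A comonotonic (resp. counter-monotonic) version of $(X,Y)$ is a comonotonic (resp. counter-monotonic) pair $(X',Y')$ with $X'$ equal in distribution to $X$ and $Y'$ equal in distribution to $Y$. *)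

theory Defs
  imports "HOL-Probability.Probability"
begin

definition atomless :: "'a measure \<Rightarrow> bool" where
  "atomless M \<longleftrightarrow> (\<forall>A\<in>sets M. measure M A > 0 \<longrightarrow>
      (\<exists>B\<in>sets M. B \<subseteq> A \<and> 0 < measure M B \<and> measure M B < measure M A))"

definition exp_well_defined :: "'a measure \<Rightarrow> ('a \<Rightarrow> real) \<Rightarrow> bool" where
  "exp_well_defined M Z \<longleftrightarrow>
     (\<integral>\<^sup>+ w. ennreal (max (Z w) 0) \<partial>M) < \<infinity> \<or> (\<integral>\<^sup>+ w. ennreal (max (- Z w) 0) \<partial>M) < \<infinity>"

definition ext_expectation :: "'a measure \<Rightarrow> ('a \<Rightarrow> real) \<Rightarrow> ereal" where
  "ext_expectation M Z =
     enn2ereal (\<integral>\<^sup>+ w. ennreal (max (Z w) 0) \<partial>M) - enn2ereal (\<integral>\<^sup>+ w. ennreal (max (- Z w) 0) \<partial>M)"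

definition cx_le :: "'a measure \<Rightarrow> ('a \<Rightarrow> real) \<Rightarrow> 'b measure \<Rightarrow> ('b \<Rightarrow> real) \<Rightarrow> bool" where
  "cx_le M U N V \<longleftrightarrow> (\<forall>u::real \<Rightarrow> real. convex_on UNIV u \<longrightarrow>
      exp_well_defined M (\<lambda>w. u (U w)) \<longrightarrow> exp_well_defined N (\<lambda>w. u (V w)) \<longrightarrow>
      ext_expectation M (\<lambda>w. u (U w)) \<le> ext_expectation N (\<lambda>w. u (V w)))"

definition comonotonic :: "'a measure \<Rightarrow> ('a \<Rightarrow> real) \<Rightarrow> ('a \<Rightarrow> real) \<Rightarrow> bool" where
  "comonotonic M X Y \<longleftrightarrow> (\<exists>(Z::'a \<Rightarrow> real) (f::real \<Rightarrow> real) (g::real \<Rightarrow> real).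
      Z \<in> borel_measurable M \<and> mono f \<and> mono g \<and>
      (AE w in M. X w = f (Z w) \<and> Y w = g (Z w)))"

definition counter_monotonic :: "'a measure \<Rightarrow> ('a \<Rightarrow> real) \<Rightarrow> ('a \<Rightarrow> real) \<Rightarrow> bool" where
  "counter_monotonic M X Y \<longleftrightarrow> comonotonic M X (\<lambda>w. - Y w)"

definition comonotonic_version ::
  "'a measure \<Rightarrow> ('a \<Rightarrow> real) \<Rightarrow> ('a \<Rightarrow> real) \<Rightarrow> ('a \<Rightarrow> real) \<Rightarrow> ('a \<Rightarrow> real) \<Rightarrow> bool" where
  "comonotonic_version M X Y X' Y' \<longleftrightarrow>
     X' \<in> borel_measurable M \<and> Y' \<in> borel_measurable M \<and> comonotonic M X' Y' \<and>
     distr M borel X' = distr M borel X \<and> distr M borel Y' = distr M borel Y"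

definition counter_monotonic_version ::
  "'a measure \<Rightarrow> ('a \<Rightarrow> real) \<Rightarrow> ('a \<Rightarrow> real) \<Rightarrow> ('a \<Rightarrow> real) \<Rightarrow> ('a \<Rightarrow> real) \<Rightarrow> bool" where
  "counter_monotonic_version M X Y X' Y' \<longleftrightarrow>
     X' \<in> borel_measurable M \<and> Y' \<in> borel_measurable M \<and> counter_monotonic M X' Y' \<and>
     distr M borel X' = distr M borel X \<and> distr M borel Y' = distr M borel Y"

end

theory Submission
  imports Defs
begin

text \<open>By Fubini, the stop-loss transform of a sum is an integral of joint tail probabilities,
  \<open>E[(X + Y - d)\<^sup>+] = \<integral> P(X > t, Y \<ge> d - t) dt\<close>. Among couplings with given marginals the
  comonotonic one maximises and the counter-monotonic one minimises every such joint tail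
  probability (Frechet-Hoeffding bounds), since the relevant events are then nested, respectively
  disjoint or covering. Applied to \<open>(X, Y)\<close> and to \<open>(-X, -Y)\<close>, this orders both tails of the
  sums in stop-loss order, and stop-loss order in both tails implies convex order even without
  integrability: a convex function with a minimum splits into a nondecreasing and a
  nonincreasing part, each an increasing limit of nonnegative combinations of hinges
  \<open>(x - k)\<^sup>+\<close> (Fatou's lemma), and an arbitrary convex function is a decreasing limit of
  such functions truncated from below.\<close>

section \<open>Convex functions on the real line\<close>

lemma convex_on_secant_extrapolation_le:
  fixes w :: "real \<Rightarrow> real"
  assumes "convex_on I w" and "a \<in> I" "x \<in> I" and "a < b" "b \<le> x"
  shows "w b + (w b - w a) / (b - a) * (x - b) \<le> w x"
proof (cases "b = x")
  case False
  with assms have "b < x" by simp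
  have "(w a - w b) / (a - b) \<le> (w b - w x) / (b - x)"
    using convex_on_slope_le[OF assms(1-3), of b] assms \<open>b < x\<close> by linarith
  then have "(w b - w a) / (b - a) \<le> (w x - w b) / (x - b)"
    by (metis minus_diff_eq minus_divide_divide)
  with \<open>b < x\<close> show ?thesis
    by (simp add: pos_le_divide_eq)
qed simp

lemma convex_on_mono_on_from_minimizer:
  fixes u :: "real \<Rightarrow> real"
  assumes "convex_on UNIV u" and "\<And>x. u c \<le> u x"
  shows "mono_on {c..} u"
proof (rule mono_onI)
  fix p q assume "p \<in> {c..}" "q \<in> {c..}" "p \<le> q"
  show "u p \<le> u q"
  proof (cases "p = c")
    case False
    with \<open>p \<in> {c..}\<close> have "c < p" by simp
    have "0 \<le> (u p - u c) / (p - c) * (q - p)"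
      using assms(2)[of p] \<open>c < p\<close> \<open>p \<le> q\<close> by simp
    then show ?thesis
      using convex_on_secant_extrapolation_le[OF assms(1) _ _ \<open>c < p\<close> \<open>p \<le> q\<close>] by simp
  qed (use assms(2) in simp)
qed

lemma convex_on_max:
  fixes f g :: "'a::real_vector \<Rightarrow> real"
  assumes "convex_on A f" and "convex_on A g"
  shows "convex_on A (\<lambda>x. max (f x) (g x))"
proof (rule convex_onI)
  fix t :: real and x y assume "0 < t" "t < 1" "x \<in> A" "y \<in> A"
  moreover have "(1 - t) * f x \<le> (1 - t) * max (f x) (g x)" "(1 - t) * g x \<le> (1 - t) * max (f x) (g x)"
    "t * f y \<le> t * max (f y) (g y)" "t * g y \<le> t * max (f y) (g y)"
    using \<open>0 < t\<close> \<open>t < 1\<close> by (simp_all add: mult_left_mono)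
  moreover have "f ((1 - t) *\<^sub>R x + t *\<^sub>R y) \<le> (1 - t) * f x + t * f y"
    "g ((1 - t) *\<^sub>R x + t *\<^sub>R y) \<le> (1 - t) * g x + t * g y"
    using convex_onD[OF assms(1), of t x y] convex_onD[OF assms(2), of t x y] calculation by simp_all
  ultimately show "max (f ((1 - t) *\<^sub>R x + t *\<^sub>R y)) (g ((1 - t) *\<^sub>R x + t *\<^sub>R y))
      \<le> (1 - t) * max (f x) (g x) + t * max (f y) (g y)"
    by (simp only: max.bounded_iff) linarith
qed (use assms convex_on_imp_convex in blast)

lemma convex_on_reflect:
  fixes u :: "real \<Rightarrow> real"
  assumes "convex_on UNIV u"
  shows "convex_on UNIV (\<lambda>y. u (- y))"
proof (rule convex_onI)
  fix t x y :: real assume "0 < t" "t < 1"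
  then show "u (- ((1 - t) *\<^sub>R x + t *\<^sub>R y)) \<le> (1 - t) * u (- x) + t * u (- y)"
    using convex_onD[OF assms, of t "- x" "- y"] by (simp add: algebra_simps)
qed simp

lemma convex_on_clamp_at_minimizer:
  fixes u :: "real \<Rightarrow> real"
  assumes "convex_on UNIV u" and "\<And>x. u c \<le> u x"
  shows "convex_on UNIV (\<lambda>x. u (max x c))"
proof (rule convex_onI)
  fix t x y :: real assume t: "0 < t" "t < 1"
  define p where "p = (1 - t) * max x c + t * max y c"
  have "(1 - t) * x \<le> (1 - t) * max x c" "t * y \<le> t * max y c"
    "(1 - t) * c \<le> (1 - t) * max x c" "t * c \<le> t * max y c"
    using t by (simp_all add: mult_left_mono)
  moreover have "c = (1 - t) * c + t * c"
    by (simp add: algebra_simps)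
  ultimately have "max ((1 - t) * x + t * y) c \<le> p"
    unfolding p_def max.bounded_iff by linarith
  then have "u (max ((1 - t) * x + t * y) c) \<le> u p"
    by (intro mono_onD[OF convex_on_mono_on_from_minimizer[OF assms]]) auto
  also have "u p \<le> (1 - t) * u (max x c) + t * u (max y c)"
    unfolding p_def using convex_onD[OF assms(1), of t "max x c" "max y c"] t by simp
  finally show "u (max ((1 - t) *\<^sub>R x + t *\<^sub>R y) c) \<le> (1 - t) * u (max x c) + t * u (max y c)"
    by simp
qed simp

section \<open>Approximation by hinge functions\<close>

locale hinge_approximation =
  fixes w :: "real \<Rightarrow> real" and c h :: real
  assumes convex: "convex_on UNIV w" and mono: "mono w"
    and vanishes: "\<And>x. x \<le> c \<Longrightarrow> w x = 0" and step_pos: "0 < h"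
begin

definition knot :: "nat \<Rightarrow> real" where
  "knot j = c + real j * h"

definition slope :: "nat \<Rightarrow> real" where
  "slope i = (w (knot (Suc i)) - w (knot i)) / h"

definition weight :: "nat \<Rightarrow> real" where
  "weight i = (if i = 0 then slope 0 else slope i - slope (i - 1))"

text \<open>The polygon with slope \<open>slope i\<close> on \<open>[knot (i + 1), knot (i + 2)]\<close>: the secant
  interpolation of \<open>w\<close> on the grid shifted one step to the right, hence a minorant of \<open>w\<close>.\<close>
definition approx :: "nat \<Rightarrow> real \<Rightarrow> real" where
  "approx N x = (\<Sum>i<N. weight i * max (x - knot (Suc i)) 0)"

lemma nonneg: "0 \<le> w x"
  using monoD[OF mono, of c "max x c"] vanishes[of c] vanishes[of x] by (cases "x \<le> c") auto

lemma knot_Suc: "knot (Suc i) = knot i + h"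
  by (simp add: knot_def algebra_simps)

lemma slope_nonneg: "0 \<le> slope i"
  unfolding slope_def using step_pos monoD[OF mono, of "knot i" "knot (Suc i)"] by (simp add: knot_Suc)

lemma slope_Suc_ge: "slope i \<le> slope (Suc i)"
  using convex_on_secant_extrapolation_le[OF convex, of "knot i" "knot (Suc (Suc i))" "knot (Suc i)"]
    step_pos
  by (simp add: slope_def knot_Suc field_simps)

lemma weight_nonneg: "0 \<le> weight i"
  unfolding weight_def using slope_nonneg slope_Suc_ge[of "i - 1"] by (cases i) auto

lemma sum_weight_linear:
  "(\<Sum>i<Suc m. weight i * (x - knot (Suc i))) = slope m * (x - knot (Suc m)) + w (knot m)"
proof (induction m)
  case 0
  then show ?case
    using vanishes[of c] by (simp add: weight_def knot_def)
next
  case (Suc m)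
  then have "(\<Sum>i<Suc (Suc m). weight i * (x - knot (Suc i))) =
      slope (Suc m) * (x - knot (Suc (Suc m))) + (slope m * h + w (knot m))"
    by (simp add: weight_def knot_Suc algebra_simps)
  also have "slope m * h + w (knot m) = w (knot (Suc m))"
    unfolding slope_def using step_pos by simp
  finally show ?case .
qed

definition index :: "real \<Rightarrow> nat" where
  "index x = nat \<lfloor>(x - c) / h\<rfloor>"

lemma knot_le_if_less_index:
  assumes "i < index x"
  shows "knot (Suc i) \<le> x"
proof -
  from assms have "of_int (int (Suc i)) \<le> (x - c) / h"
    unfolding index_def by (simp only: le_floor_iff[symmetric])
  then show ?thesis
    unfolding knot_def using step_pos by (simp add: field_simps)
qed

lemma less_knot_if_index_le: "index x \<le> i \<Longrightarrow> x < knot (Suc i)"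
  unfolding index_def knot_def using step_pos
  by (simp add: nat_le_iff floor_le_iff field_simps flip: of_nat_Suc)

lemma approx_eq: "approx N x = (\<Sum>i<min N (index x). weight i * (x - knot (Suc i)))"
proof -
  have "approx N x = (\<Sum>i<min N (index x). weight i * max (x - knot (Suc i)) 0)"
    unfolding approx_def
  proof (intro sum.mono_neutral_right ballI)
    fix i assume "i \<in> {..<N} - {..<min N (index x)}"
    then have "index x \<le> i"
      by auto
    then show "weight i * max (x - knot (Suc i)) 0 = 0"
      using less_knot_if_index_le[of x i] by simp
  qed auto
  also have "\<dots> = (\<Sum>i<min N (index x). weight i * (x - knot (Suc i)))"
    by (intro sum.cong refl) (auto dest!: knot_le_if_less_index)
  finally show ?thesis .
qed

lemma approx_le: "approx N x \<le> w x"
proof (cases "min N (index x)")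
  case 0
  then show ?thesis using approx_eq[of N x] nonneg by simp
next
  case (Suc m)
  then have "knot (Suc m) \<le> x"
    by (intro knot_le_if_less_index) simp
  have "approx N x = slope m * (x - knot (Suc m)) + w (knot m)"
    using approx_eq[of N x] Suc sum_weight_linear by simp
  also have "\<dots> \<le> slope m * (x - knot (Suc m)) + w (knot (Suc m))"
    using monoD[OF mono, of "knot m" "knot (Suc m)"] step_pos by (simp add: knot_Suc)
  also have "\<dots> \<le> w x"
    using convex_on_secant_extrapolation_le[OF convex, of "knot m" x "knot (Suc m)"]
      \<open>knot (Suc m) \<le> x\<close> step_pos
    by (simp add: knot_Suc slope_def algebra_simps)
  finally show ?thesis .
qed

lemma approx_ge:
  assumes "x < knot N"
  shows "w (x - 2 * h) \<le> approx N x"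
proof -
  have "index x \<le> N"
    using knot_le_if_less_index[of N x] assms step_pos by (force simp: knot_Suc)
  show ?thesis
  proof (cases "index x")
    case 0
    then have "x - 2 * h \<le> c"
      using less_knot_if_index_le[of x 0] step_pos by (simp add: knot_def)
    then show ?thesis
      using vanishes approx_eq[of N x] \<open>index x = 0\<close> by simp
  next
    case (Suc m)
    then have "knot (Suc m) \<le> x" "x < knot (Suc (Suc m))"
      using knot_le_if_less_index[of m x] less_knot_if_index_le[of x "Suc m"] by simp_all
    then have "w (x - 2 * h) \<le> w (knot m)"
      by (intro monoD[OF mono]) (simp add: knot_Suc)
    also have "\<dots> \<le> slope m * (x - knot (Suc m)) + w (knot m)"
      using slope_nonneg[of m] \<open>knot (Suc m) \<le> x\<close> by simp
    also have "\<dots> = approx N x"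
      using approx_eq[of N x] \<open>index x \<le> N\<close> Suc sum_weight_linear by simp
    finally show ?thesis .
  qed
qed

end

section \<open>Stop-loss order and convex order\<close>

text \<open>Since \<open>ennreal\<close> maps negative reals to \<open>0\<close>, this is \<open>E[(S - d)\<^sup>+]\<close>.\<close>
definition stop_loss :: "'a measure \<Rightarrow> ('a \<Rightarrow> real) \<Rightarrow> real \<Rightarrow> ennreal" where
  "stop_loss M S d = (\<integral>\<^sup>+\<omega>. ennreal (S \<omega> - d) \<partial>M)"

lemma (in hinge_approximation) nn_integral_approx:
  assumes [measurable]: "S \<in> borel_measurable M"
  shows "(\<integral>\<^sup>+\<omega>. ennreal (approx N (S \<omega>)) \<partial>M) = (\<Sum>i<N. ennreal (weight i) * stop_loss M S (knot (Suc i)))"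
proof -
  have "ennreal (approx N (S \<omega>)) = (\<Sum>i<N. ennreal (weight i) * ennreal (S \<omega> - knot (Suc i)))" for \<omega>
    unfolding approx_def using weight_nonneg
    by (simp add: sum_ennreal[symmetric] ennreal_mult max.commute[of _ 0] ennreal_max_0)
  then show ?thesis
    by (simp add: nn_integral_sum nn_integral_cmult stop_loss_def)
qed

lemma hinge_approximation_tendsto:
  fixes w :: "real \<Rightarrow> real"
  assumes "convex_on UNIV w" and "mono w" and "\<And>x. x \<le> c \<Longrightarrow> w x = 0"
  shows "(\<lambda>n. hinge_approximation.approx w c (1 / Suc n) ((Suc n)\<^sup>2) x) \<longlonglongrightarrow> w x"
proof (rule tendsto_sandwich)
  define h :: "nat \<Rightarrow> real" where "h n = 1 / Suc n" for n
  interpret hinge_approximation w c "h n" for n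
    using assms by unfold_locales (simp_all add: h_def)
  obtain n0 :: nat where "x - c < n0"
    using reals_Archimedean2 by blast
  have "x < knot n ((Suc n)\<^sup>2)" if "n0 \<le> n" for n
  proof -
    have "real ((Suc n)\<^sup>2) * h n = Suc n"
      by (simp add: h_def power2_eq_square field_simps)
    then show ?thesis
      unfolding knot_def using that \<open>x - c < n0\<close> by simp
  qed
  then show "eventually (\<lambda>n. w (x - 2 * h n) \<le> approx n ((Suc n)\<^sup>2) x) sequentially"
    by (intro eventually_sequentiallyI[of n0] approx_ge)
  show "eventually (\<lambda>n. approx n ((Suc n)\<^sup>2) x \<le> w x) sequentially"
    by (simp add: approx_le)
  have "continuous_on UNIV w"
    by (rule convex_on_continuous[OF open_UNIV assms(1)])
  moreover have "(\<lambda>n. x - 2 * h n) \<longlonglongrightarrow> x - 2 * 0"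
    unfolding h_def by (intro tendsto_intros LIMSEQ_inverse_real_of_nat[unfolded inverse_eq_divide])
  ultimately show "(\<lambda>n. w (x - 2 * h n)) \<longlonglongrightarrow> w x"
    by (metis UNIV_I continuous_on_eq_continuous_at open_UNIV isCont_tendsto_compose diff_zero mult_zero_right)
qed simp

lemma nn_integral_convex_le_if_stop_loss_le:
  fixes w :: "real \<Rightarrow> real" and S1 S2 :: "'a \<Rightarrow> real"
  assumes "convex_on UNIV w" and "mono w" and "\<And>x. x \<le> c \<Longrightarrow> w x = 0"
    and [measurable]: "S1 \<in> borel_measurable M" "S2 \<in> borel_measurable M"
    and stop_loss_le: "\<And>d. stop_loss M S1 d \<le> stop_loss M S2 d"
  shows "(\<integral>\<^sup>+\<omega>. ennreal (w (S1 \<omega>)) \<partial>M) \<le> (\<integral>\<^sup>+\<omega>. ennreal (w (S2 \<omega>)) \<partial>M)"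
proof -
  define h :: "nat \<Rightarrow> real" where "h n = 1 / Suc n" for n
  interpret hinge_approximation w c "h n" for n
    using assms(1-3) by unfold_locales (simp_all add: h_def)
  define V where "V n = approx n ((Suc n)\<^sup>2)" for n
  have [measurable]: "w \<in> borel_measurable borel"
    by (intro borel_measurable_continuous_onI convex_on_continuous[OF open_UNIV assms(1)])
  have [measurable]: "(\<lambda>\<omega>. V n (S \<omega>)) \<in> borel_measurable M" if "S \<in> borel_measurable M" for n S
    using that unfolding V_def approx_def by measurable
  have V_le: "(\<integral>\<^sup>+\<omega>. ennreal (V n (S1 \<omega>)) \<partial>M) \<le> (\<integral>\<^sup>+\<omega>. ennreal (w (S2 \<omega>)) \<partial>M)" for n
  proof -
    have "(\<integral>\<^sup>+\<omega>. ennreal (V n (S1 \<omega>)) \<partial>M) \<le> (\<integral>\<^sup>+\<omega>. ennreal (V n (S2 \<omega>)) \<partial>M)"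
      unfolding V_def nn_integral_approx[OF assms(4)] nn_integral_approx[OF assms(5)]
      by (intro sum_mono mult_left_mono stop_loss_le) auto
    also have "\<dots> \<le> (\<integral>\<^sup>+\<omega>. ennreal (w (S2 \<omega>)) \<partial>M)"
      by (intro nn_integral_mono ennreal_leI) (simp add: V_def approx_le)
    finally show ?thesis .
  qed
  have "(\<lambda>n. ennreal (V n (S1 \<omega>))) \<longlonglongrightarrow> ennreal (w (S1 \<omega>))" for \<omega>
    using hinge_approximation_tendsto[of w c "S1 \<omega>"] assms(1-3)
    by (intro tendsto_ennrealI) (simp add: V_def h_def)
  then have "ennreal (w (S1 \<omega>)) = liminf (\<lambda>n. ennreal (V n (S1 \<omega>)))" for \<omega>
    using lim_imp_Liminf[OF sequentially_bot] by metis
  then have "(\<integral>\<^sup>+\<omega>. ennreal (w (S1 \<omega>)) \<partial>M) = (\<integral>\<^sup>+\<omega>. liminf (\<lambda>n. ennreal (V n (S1 \<omega>))) \<partial>M)"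
    by simp
  also have "\<dots> \<le> liminf (\<lambda>n. \<integral>\<^sup>+\<omega>. ennreal (V n (S1 \<omega>)) \<partial>M)"
    by (rule nn_integral_liminf) measurable
  also have "\<dots> \<le> (\<integral>\<^sup>+\<omega>. ennreal (w (S2 \<omega>)) \<partial>M)"
    using Liminf_mono[of _ "\<lambda>_. \<integral>\<^sup>+\<omega>. ennreal (w (S2 \<omega>)) \<partial>M" sequentially] V_le
    by (simp add: Liminf_const)
  finally show ?thesis .
qed

lemma ext_expectation_integrable:
  fixes Z :: "'a \<Rightarrow> real"
  assumes "integrable M Z"
  shows "ext_expectation M Z = ereal (integral\<^sup>L M Z)"
proof -
  have pos: "integrable M (\<lambda>\<omega>. max (Z \<omega>) 0)" and neg: "integrable M (\<lambda>\<omega>. max (- Z \<omega>) 0)"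
    using assms by auto
  have "integral\<^sup>L M Z = integral\<^sup>L M (\<lambda>\<omega>. max (Z \<omega>) 0 - max (- Z \<omega>) 0)"
    by (intro Bochner_Integration.integral_cong) auto
  also have "\<dots> = integral\<^sup>L M (\<lambda>\<omega>. max (Z \<omega>) 0) - integral\<^sup>L M (\<lambda>\<omega>. max (- Z \<omega>) 0)"
    using pos neg by (rule Bochner_Integration.integral_diff)
  moreover have "(\<integral>\<^sup>+\<omega>. ennreal (max (Z \<omega>) 0) \<partial>M) = ennreal (integral\<^sup>L M (\<lambda>\<omega>. max (Z \<omega>) 0))"
    "(\<integral>\<^sup>+\<omega>. ennreal (max (- Z \<omega>) 0) \<partial>M) = ennreal (integral\<^sup>L M (\<lambda>\<omega>. max (- Z \<omega>) 0))"
    by (simp_all only: nn_integral_eq_integral[OF pos] nn_integral_eq_integral[OF neg] AE_I2 max.cobounded2)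
  ultimately show ?thesis
    unfolding ext_expectation_def by (simp add: integral_nonneg_AE)
qed

lemma ext_expectation_mono:
  fixes Z W :: "'a \<Rightarrow> real"
  assumes "\<And>\<omega>. \<omega> \<in> space M \<Longrightarrow> Z \<omega> \<le> W \<omega>"
  shows "ext_expectation M Z \<le> ext_expectation M W"
  unfolding ext_expectation_def
  using assms by (intro ereal_minus_mono)
    (auto intro!: nn_integral_mono ennreal_leI simp: less_eq_ennreal.rep_eq[symmetric])

lemma (in prob_space) ext_expectation_const_add_nonneg:
  fixes P :: "'a \<Rightarrow> real"
  assumes [measurable]: "P \<in> borel_measurable M" and nonneg: "\<And>\<omega>. \<omega> \<in> space M \<Longrightarrow> 0 \<le> P \<omega>"
  shows "ext_expectation M (\<lambda>\<omega>. a + P \<omega>) = ereal a + enn2ereal (\<integral>\<^sup>+\<omega>. ennreal (P \<omega>) \<partial>M)"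
proof (cases "(\<integral>\<^sup>+\<omega>. ennreal (P \<omega>) \<partial>M) = \<infinity>")
  case False
  then obtain r where r: "(\<integral>\<^sup>+\<omega>. ennreal (P \<omega>) \<partial>M) = ennreal r" "0 \<le> r"
    by (cases "\<integral>\<^sup>+\<omega>. ennreal (P \<omega>) \<partial>M" rule: ennreal_cases) auto
  then have "integrable M P"
    using nonneg by (intro integrableI_nn_integral_finite) auto
  moreover from this have "integral\<^sup>L M P = r"
    using r nonneg nn_integral_eq_integral[of M P] by (simp add: integral_nonneg_AE)
  ultimately show ?thesis
    using r by (simp add: ext_expectation_integrable prob_space)
next
  case True
  have "(\<integral>\<^sup>+\<omega>. ennreal (P \<omega>) \<partial>M) \<le> (\<integral>\<^sup>+\<omega>. ennreal (max (a + P \<omega>) 0) + ennreal \<bar>a\<bar> \<partial>M)"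
  proof (intro nn_integral_mono)
    fix \<omega>
    have "ennreal (P \<omega>) \<le> ennreal (max (a + P \<omega>) 0 + \<bar>a\<bar>)"
      by (intro ennreal_leI) auto
    then show "ennreal (P \<omega>) \<le> ennreal (max (a + P \<omega>) 0) + ennreal \<bar>a\<bar>"
      by (simp only: ennreal_plus max.cobounded2 abs_ge_zero)
  qed
  also have "\<dots> = (\<integral>\<^sup>+\<omega>. ennreal (max (a + P \<omega>) 0) \<partial>M) + ennreal \<bar>a\<bar>"
    by (simp add: nn_integral_add emeasure_space_1)
  finally have "(\<integral>\<^sup>+\<omega>. ennreal (max (a + P \<omega>) 0) \<partial>M) = \<infinity>"
    using True by (simp add: top_unique)
  moreover have "(\<integral>\<^sup>+\<omega>. ennreal (max (- (a + P \<omega>)) 0) \<partial>M) \<le> ennreal \<bar>a\<bar>"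
    using nn_integral_mono[of M "\<lambda>\<omega>. ennreal (max (- (a + P \<omega>)) 0)" "\<lambda>_. ennreal \<bar>a\<bar>"] nonneg
    by (force simp: emeasure_space_1 intro: ennreal_leI)
  ultimately show ?thesis
    unfolding ext_expectation_def True by (auto simp: top_unique)
qed

lemma ext_expectation_tendsto_decseq:
  fixes f :: "nat \<Rightarrow> 'a \<Rightarrow> real"
  assumes [measurable]: "\<And>n. f n \<in> borel_measurable M" "Z \<in> borel_measurable M"
    and dec: "\<And>n \<omega>. f (Suc n) \<omega> \<le> f n \<omega>" and lim: "\<And>\<omega>. (\<lambda>n. f n \<omega>) \<longlonglongrightarrow> Z \<omega>"
    and fin: "(\<integral>\<^sup>+\<omega>. ennreal (max (f 0 \<omega>) 0) \<partial>M) < \<infinity>"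
  shows "(\<lambda>n. ext_expectation M (f n)) \<longlonglongrightarrow> ext_expectation M Z"
proof -
  have f_le: "f n \<omega> \<le> f 0 \<omega>" for n \<omega>
    by (induction n) (auto intro: order_trans[OF dec])
  have pos: "(\<lambda>n. \<integral>\<^sup>+\<omega>. ennreal (max (f n \<omega>) 0) \<partial>M) \<longlonglongrightarrow> (\<integral>\<^sup>+\<omega>. ennreal (max (Z \<omega>) 0) \<partial>M)"
    using fin f_le
    by (intro nn_integral_dominated_convergence[where w="\<lambda>\<omega>. ennreal (max (f 0 \<omega>) 0)"])
      (auto intro!: ennreal_leI tendsto_ennrealI tendsto_max lim)
  have neg: "(\<lambda>n. \<integral>\<^sup>+\<omega>. ennreal (max (- f n \<omega>) 0) \<partial>M) \<longlonglongrightarrow> (\<integral>\<^sup>+\<omega>. ennreal (max (- Z \<omega>) 0) \<partial>M)"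
    using dec
    by (intro nn_integral_LIMSEQ)
      (auto intro!: incseq_SucI le_funI ennreal_leI tendsto_ennrealI tendsto_max tendsto_minus lim)
  have "(\<integral>\<^sup>+\<omega>. ennreal (max (Z \<omega>) 0) \<partial>M) \<le> (\<integral>\<^sup>+\<omega>. ennreal (max (f 0 \<omega>) 0) \<partial>M)"
    using LIMSEQ_le_const2[OF lim] f_le by (intro nn_integral_mono ennreal_leI max.mono) auto
  then have "enn2ereal (\<integral>\<^sup>+\<omega>. ennreal (max (Z \<omega>) 0) \<partial>M) \<noteq> \<infinity>"
    using fin by (auto simp: top_unique)
  then show ?thesis
    unfolding ext_expectation_def using pos neg
    by (intro tendsto_diff_ereal_general) (auto simp: enn2ereal_nonneg)
qed

lemma (in prob_space) nn_integral_pos_part_max_less_top: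
  fixes Z :: "'a \<Rightarrow> real"
  assumes [measurable]: "Z \<in> borel_measurable M"
    and "(\<integral>\<^sup>+\<omega>. ennreal (max (Z \<omega>) 0) \<partial>M) < \<infinity>"
  shows "(\<integral>\<^sup>+\<omega>. ennreal (max (max (Z \<omega>) a) 0) \<partial>M) < \<infinity>"
proof -
  have "(\<integral>\<^sup>+\<omega>. ennreal (max (max (Z \<omega>) a) 0) \<partial>M) \<le> (\<integral>\<^sup>+\<omega>. ennreal (max (Z \<omega>) 0) + ennreal \<bar>a\<bar> \<partial>M)"
  proof (intro nn_integral_mono)
    fix \<omega>
    have "ennreal (max (max (Z \<omega>) a) 0) \<le> ennreal (max (Z \<omega>) 0 + \<bar>a\<bar>)"
      by (intro ennreal_leI) auto
    then show "ennreal (max (max (Z \<omega>) a) 0) \<le> ennreal (max (Z \<omega>) 0) + ennreal \<bar>a\<bar>"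
      by (simp only: ennreal_plus max.cobounded2 abs_ge_zero)
  qed
  also have "\<dots> < \<infinity>"
    using assms(2) by (simp add: nn_integral_add emeasure_space_1 less_top[symmetric])
  finally show ?thesis .
qed

lemma nn_integral_clamp_le_if_stop_loss_le:
  fixes u :: "real \<Rightarrow> real" and S1 S2 :: "'a \<Rightarrow> real"
  assumes "convex_on UNIV u" and "\<And>x. u c \<le> u x"
    and "S1 \<in> borel_measurable M" "S2 \<in> borel_measurable M"
    and "\<And>d. stop_loss M S1 d \<le> stop_loss M S2 d"
  shows "(\<integral>\<^sup>+\<omega>. ennreal (u (max (S1 \<omega>) c) - u c) \<partial>M) \<le> (\<integral>\<^sup>+\<omega>. ennreal (u (max (S2 \<omega>) c) - u c) \<partial>M)"
proof -
  have "convex_on UNIV (\<lambda>x. u (max x c) - u c)"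
    using convex_on_clamp_at_minimizer[OF assms(1,2)] by (rule convex_on_diff) (simp add: concave_on_const)
  moreover have "mono (\<lambda>x. u (max x c) - u c)"
    using convex_on_mono_on_from_minimizer[OF assms(1,2)] by (intro monoI) (simp add: mono_onD)
  ultimately show ?thesis
    using nn_integral_convex_le_if_stop_loss_le[of "\<lambda>x. u (max x c) - u c" c S1 M S2] assms(3-5)
    by simp
qed

lemma (in prob_space) ext_expectation_split_at_minimizer:
  fixes u :: "real \<Rightarrow> real" and S :: "'a \<Rightarrow> real"
  assumes [measurable]: "u \<in> borel_measurable borel" "S \<in> borel_measurable M"
    and minimizer: "\<And>x. u c \<le> u x"
  shows "ext_expectation M (\<lambda>\<omega>. u (S \<omega>)) = ereal (u c) + enn2ereal
    ((\<integral>\<^sup>+\<omega>. ennreal (u (max (S \<omega>) c) - u c) \<partial>M) + (\<integral>\<^sup>+\<omega>. ennreal (u (- max (- S \<omega>) (- c)) - u c) \<partial>M))"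
proof -
  have "(\<lambda>\<omega>. u (S \<omega>)) = (\<lambda>\<omega>. u c + ((u (max (S \<omega>) c) - u c) + (u (- max (- S \<omega>) (- c)) - u c)))"
    by (rule ext) (simp add: max_def)
  then have "ext_expectation M (\<lambda>\<omega>. u (S \<omega>)) = ext_expectation M
      (\<lambda>\<omega>. u c + ((u (max (S \<omega>) c) - u c) + (u (- max (- S \<omega>) (- c)) - u c)))"
    by (rule arg_cong)
  also have "\<dots> = ereal (u c) + enn2ereal (\<integral>\<^sup>+\<omega>. ennreal
      ((u (max (S \<omega>) c) - u c) + (u (- max (- S \<omega>) (- c)) - u c)) \<partial>M)"
  proof (rule ext_expectation_const_add_nonneg)
    show "0 \<le> (u (max (S \<omega>) c) - u c) + (u (- max (- S \<omega>) (- c)) - u c)" for \<omega>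
      using minimizer[of "max (S \<omega>) c"] minimizer[of "- max (- S \<omega>) (- c)"] by linarith
  qed simp
  also have "(\<integral>\<^sup>+\<omega>. ennreal ((u (max (S \<omega>) c) - u c) + (u (- max (- S \<omega>) (- c)) - u c)) \<partial>M) =
      (\<integral>\<^sup>+\<omega>. ennreal (u (max (S \<omega>) c) - u c) \<partial>M) + (\<integral>\<^sup>+\<omega>. ennreal (u (- max (- S \<omega>) (- c)) - u c) \<partial>M)"
  proof -
    have "ennreal ((u (max (S \<omega>) c) - u c) + (u (- max (- S \<omega>) (- c)) - u c)) =
        ennreal (u (max (S \<omega>) c) - u c) + ennreal (u (- max (- S \<omega>) (- c)) - u c)" for \<omega>
      by (rule ennreal_plus) (simp_all add: minimizer)
    then show ?thesis
      by (simp only:) (rule nn_integral_add; measurable)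
  qed
  finally show ?thesis .
qed

lemma (in prob_space) ext_expectation_le_if_stop_loss_le_minimizer:
  fixes u :: "real \<Rightarrow> real" and S1 S2 :: "'a \<Rightarrow> real"
  assumes "convex_on UNIV u" and "\<And>x. u c \<le> u x"
    and [measurable]: "S1 \<in> borel_measurable M" "S2 \<in> borel_measurable M"
    and "\<And>d. stop_loss M S1 d \<le> stop_loss M S2 d"
    and "\<And>d. stop_loss M (\<lambda>\<omega>. - S1 \<omega>) d \<le> stop_loss M (\<lambda>\<omega>. - S2 \<omega>) d"
  shows "ext_expectation M (\<lambda>\<omega>. u (S1 \<omega>)) \<le> ext_expectation M (\<lambda>\<omega>. u (S2 \<omega>))"
proof -
  have u_measurable[measurable]: "u \<in> borel_measurable borel"
    by (intro borel_measurable_continuous_onI convex_on_continuous[OF open_UNIV assms(1)])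
  have "(\<integral>\<^sup>+\<omega>. ennreal (u (max (S1 \<omega>) c) - u c) \<partial>M) \<le> (\<integral>\<^sup>+\<omega>. ennreal (u (max (S2 \<omega>) c) - u c) \<partial>M)"
    using assms(1-5) by (rule nn_integral_clamp_le_if_stop_loss_le)
  moreover have "(\<integral>\<^sup>+\<omega>. ennreal (u (- max (- S1 \<omega>) (- c)) - u c) \<partial>M)
      \<le> (\<integral>\<^sup>+\<omega>. ennreal (u (- max (- S2 \<omega>) (- c)) - u c) \<partial>M)"
    using nn_integral_clamp_le_if_stop_loss_le[OF convex_on_reflect[OF assms(1)],
        of "- c" "\<lambda>\<omega>. - S1 \<omega>" M "\<lambda>\<omega>. - S2 \<omega>"] assms(2,6)
    by simp
  ultimately show ?thesis
    unfolding ext_expectation_split_at_minimizer[OF u_measurable assms(3,2)]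
      ext_expectation_split_at_minimizer[OF u_measurable assms(4,2)]
    by (intro add_mono order_refl) (simp add: add_mono less_eq_ennreal.rep_eq[symmetric])
qed

lemma obtain_truncation_levels:
  fixes u :: "'b \<Rightarrow> real"
  obtains m :: "nat \<Rightarrow> real" where "decseq m" and "\<And>n. \<exists>x. u x \<le> m n"
    and "\<And>x. (\<lambda>n. max (u x) (m n)) \<longlonglongrightarrow> u x"
proof (cases "bdd_below (range u)")
  case True
  define m where "m n = Inf (range u) + 1 / Suc n" for n
  have "decseq m"
    unfolding m_def by (intro decseq_SucI) (simp add: frac_le)
  moreover have "\<exists>x. u x \<le> m n" for n
  proof -
    have "Inf (range u) < m n"
      by (simp add: m_def)
    then show ?thesis
      using cInf_lessD[of "range u" "m n"] by (auto intro: less_imp_le)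
  qed
  moreover have "(\<lambda>n. max (u x) (m n)) \<longlonglongrightarrow> u x" for x
  proof -
    have "(\<lambda>n. max (u x) (m n)) \<longlonglongrightarrow> max (u x) (Inf (range u) + 0)"
      unfolding m_def by (intro tendsto_intros LIMSEQ_inverse_real_of_nat[unfolded inverse_eq_divide])
    moreover have "max (u x) (Inf (range u) + 0) = u x"
      using cInf_lower[OF _ True, of "u x"] by simp
    ultimately show ?thesis
      by (simp only:)
  qed
  ultimately show ?thesis
    using that by blast
next
  case False
  define m where "m n = - real n" for n
  have "decseq m"
    unfolding m_def by (intro decseq_SucI) simp
  moreover have "\<exists>x. u x \<le> m n" for n
    using False unfolding bdd_below_def by (auto simp: not_le intro: less_imp_le)
  moreover have "(\<lambda>n. max (u x) (m n)) \<longlonglongrightarrow> u x" for x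
  proof (rule tendsto_eventually)
    obtain n0 :: nat where "- u x < n0"
      using reals_Archimedean2 by blast
    then show "eventually (\<lambda>n. max (u x) (m n) = u x) sequentially"
      by (intro eventually_sequentiallyI[of n0]) (auto simp: m_def)
  qed
  ultimately show ?thesis
    using that by blast
qed

lemma (in prob_space) cx_le_if_stop_loss_le:
  fixes S1 S2 :: "'a \<Rightarrow> real"
  assumes [measurable]: "S1 \<in> borel_measurable M" "S2 \<in> borel_measurable M"
    and "\<And>d. stop_loss M S1 d \<le> stop_loss M S2 d"
    and "\<And>d. stop_loss M (\<lambda>\<omega>. - S1 \<omega>) d \<le> stop_loss M (\<lambda>\<omega>. - S2 \<omega>) d"
  shows "cx_le M S1 M S2"
  unfolding cx_le_def
proof (intro allI impI)
  fix u :: "real \<Rightarrow> real"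
  assume convex: "convex_on UNIV u" and well_defined: "exp_well_defined M (\<lambda>\<omega>. u (S2 \<omega>))"
  have [measurable]: "u \<in> borel_measurable borel"
    by (intro borel_measurable_continuous_onI convex_on_continuous[OF open_UNIV convex])
  show "ext_expectation M (\<lambda>\<omega>. u (S1 \<omega>)) \<le> ext_expectation M (\<lambda>\<omega>. u (S2 \<omega>))"
  proof (cases "(\<integral>\<^sup>+\<omega>. ennreal (max (u (S2 \<omega>)) 0) \<partial>M) = \<infinity>")
    case True
    with well_defined have "ext_expectation M (\<lambda>\<omega>. u (S2 \<omega>)) = \<infinity>"
      by (auto simp: exp_well_defined_def ext_expectation_def)
    then show ?thesis
      by simp
  next
    case False
    obtain m where "decseq m" and attained: "\<And>n. \<exists>x. u x \<le> m n"
      and tendsto: "\<And>x. (\<lambda>n. max (u x) (m n)) \<longlonglongrightarrow> u x"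
      using obtain_truncation_levels[of u] by blast
    have bound: "ext_expectation M (\<lambda>\<omega>. u (S1 \<omega>)) \<le> ext_expectation M (\<lambda>\<omega>. max (u (S2 \<omega>)) (m n))" for n
    proof -
      obtain x where "u x \<le> m n"
        using attained by blast
      then have "ext_expectation M (\<lambda>\<omega>. max (u (S1 \<omega>)) (m n))
          \<le> ext_expectation M (\<lambda>\<omega>. max (u (S2 \<omega>)) (m n))"
        by (intro ext_expectation_le_if_stop_loss_le_minimizer[where c = x] convex_on_max convex
            assms(1-4)) (auto simp: convex_on_const)
      then show ?thesis
        by (rule order_trans[OF ext_expectation_mono, rotated]) simp
    qed
    have "(\<lambda>n. ext_expectation M (\<lambda>\<omega>. max (u (S2 \<omega>)) (m n)))
        \<longlonglongrightarrow> ext_expectation M (\<lambda>\<omega>. u (S2 \<omega>))"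
    proof (rule ext_expectation_tendsto_decseq)
      show "(\<integral>\<^sup>+\<omega>. ennreal (max (max (u (S2 \<omega>)) (m 0)) 0) \<partial>M) < \<infinity>"
        using False by (intro nn_integral_pos_part_max_less_top) (simp_all add: less_top)
    qed (use \<open>decseq m\<close> tendsto in \<open>auto simp: decseq_Suc_iff intro: le_max_iff_disj[THEN iffD2]\<close>)
    then show ?thesis
      by (rule tendsto_lowerbound) (simp_all add: bound always_eventually)
  qed
qed

section \<open>Comonotonic and counter-monotonic versions\<close>

lemma mono_predicates_nested:
  fixes P Q :: "'a::linorder \<Rightarrow> bool"
  assumes "mono P" and "mono Q"
  shows "(\<forall>z. P z \<longrightarrow> Q z) \<or> (\<forall>z. Q z \<longrightarrow> P z)"
  using assms by (metis le_boolD monoD nle_le)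

lemma distr_uminus_eq:
  fixes X X' :: "'a \<Rightarrow> real"
  assumes "X \<in> borel_measurable M" and "X' \<in> borel_measurable M"
    and "distr M borel X' = distr M borel X"
  shows "distr M borel (\<lambda>\<omega>. - X' \<omega>) = distr M borel (\<lambda>\<omega>. - X \<omega>)"
proof -
  have "distr M borel (\<lambda>\<omega>. - Z \<omega>) = distr (distr M borel Z) borel uminus"
    if "Z \<in> borel_measurable M" for Z :: "'a \<Rightarrow> real"
    using distr_distr[of uminus borel borel Z M] that by (simp add: comp_def)
  then show ?thesis
    using assms by simp
qed

lemma mono_reflect:
  fixes f :: "real \<Rightarrow> real"
  assumes "mono f"
  shows "mono (\<lambda>z. - f (- z))"
  using assms by (intro monoI) (simp add: monoD)

lemma comonotonic_uminus:
  assumes "comonotonic M X Y"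
  shows "comonotonic M (\<lambda>\<omega>. - X \<omega>) (\<lambda>\<omega>. - Y \<omega>)"
proof -
  obtain Z :: "'a \<Rightarrow> real" and f g where [measurable]: "Z \<in> borel_measurable M"
    and "mono f" "mono g" and repr: "AE \<omega> in M. X \<omega> = f (Z \<omega>) \<and> Y \<omega> = g (Z \<omega>)"
    using assms by (auto simp: comonotonic_def)
  have "AE \<omega> in M. - X \<omega> = - f (- (- Z \<omega>)) \<and> - Y \<omega> = - g (- (- Z \<omega>))"
    using repr by eventually_elim simp
  moreover have "(\<lambda>\<omega>. - Z \<omega>) \<in> borel_measurable M"
    by measurable
  ultimately show ?thesis
    unfolding comonotonic_def
    by (intro exI[of _ "\<lambda>\<omega>. - Z \<omega>"] exI[of _ "\<lambda>z. - f (- z)"] exI[of _ "\<lambda>z. - g (- z)"] conjI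
        mono_reflect \<open>mono f\<close> \<open>mono g\<close>)
qed

lemma comonotonic_version_uminus:
  assumes "X \<in> borel_measurable M" "Y \<in> borel_measurable M" and "comonotonic_version M X Y X' Y'"
  shows "comonotonic_version M (\<lambda>\<omega>. - X \<omega>) (\<lambda>\<omega>. - Y \<omega>) (\<lambda>\<omega>. - X' \<omega>) (\<lambda>\<omega>. - Y' \<omega>)"
  using assms unfolding comonotonic_version_def
  by (auto intro!: comonotonic_uminus distr_uminus_eq borel_measurable_uminus)

lemma counter_monotonic_version_uminus:
  assumes "X \<in> borel_measurable M" "Y \<in> borel_measurable M" and "counter_monotonic_version M X Y X' Y'"
  shows "counter_monotonic_version M (\<lambda>\<omega>. - X \<omega>) (\<lambda>\<omega>. - Y \<omega>) (\<lambda>\<omega>. - X' \<omega>) (\<lambda>\<omega>. - Y' \<omega>)"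
  using assms unfolding counter_monotonic_version_def counter_monotonic_def
  by (auto intro!: comonotonic_uminus[of M X' "\<lambda>\<omega>. - Y' \<omega>", simplified] distr_uminus_eq
      borel_measurable_uminus)

lemma (in sigma_finite_measure) stop_loss_add_eq_integral_joint_tail:
  fixes X Y :: "'a \<Rightarrow> real"
  assumes [measurable]: "X \<in> borel_measurable M" "Y \<in> borel_measurable M"
  shows "stop_loss M (\<lambda>\<omega>. X \<omega> + Y \<omega>) d =
    (\<integral>\<^sup>+t. emeasure M {\<omega>\<in>space M. t < X \<omega> \<and> d - t \<le> Y \<omega>} \<partial>lborel)"
proof -
  interpret pair_sigma_finite M lborel
    by (intro pair_sigma_finite.intro sigma_finite_measure_axioms lborel.sigma_finite_measure_axioms)
  have "ennreal (X \<omega> + Y \<omega> - d) = (\<integral>\<^sup>+t. indicator {d - Y \<omega> ..< X \<omega>} t \<partial>lborel)" for \<omega>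
    by (cases "d - Y \<omega> \<le> X \<omega>") (auto simp: ennreal_neg)
  then have "stop_loss M (\<lambda>\<omega>. X \<omega> + Y \<omega>) d = (\<integral>\<^sup>+\<omega>. (\<integral>\<^sup>+t. indicator {d - Y \<omega> ..< X \<omega>} t \<partial>lborel) \<partial>M)"
    by (simp add: stop_loss_def)
  also have "\<dots> = (\<integral>\<^sup>+t. (\<integral>\<^sup>+\<omega>. indicator {d - Y \<omega> ..< X \<omega>} t \<partial>M) \<partial>lborel)"
  proof (rule Fubini'[symmetric])
    have "Measurable.pred (M \<Otimes>\<^sub>M lborel) (\<lambda>p. d - Y (fst p) \<le> snd p \<and> snd p < X (fst p))"
      by measurable
    then show "(\<lambda>(\<omega>, t). indicator {d - Y \<omega>..<X \<omega>} t :: ennreal) \<in> borel_measurable (M \<Otimes>\<^sub>M lborel)"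
      by (auto simp: indicator_def split_beta' intro!: measurable_If)
  qed
  also have "\<dots> = (\<integral>\<^sup>+t. emeasure M {\<omega>\<in>space M. t < X \<omega> \<and> d - t \<le> Y \<omega>} \<partial>lborel)"
  proof (intro nn_integral_cong)
    fix t
    have "(\<integral>\<^sup>+\<omega>. indicator {d - Y \<omega> ..< X \<omega>} t \<partial>M) =
        (\<integral>\<^sup>+\<omega>. indicator {\<omega>\<in>space M. t < X \<omega> \<and> d - t \<le> Y \<omega>} \<omega> \<partial>M)"
      by (intro nn_integral_cong) (auto simp: indicator_def)
    then show "(\<integral>\<^sup>+\<omega>. indicator {d - Y \<omega> ..< X \<omega>} t \<partial>M) = emeasure M {\<omega>\<in>space M. t < X \<omega> \<and> d - t \<le> Y \<omega>}"
      by simp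
  qed
  finally show ?thesis .
qed

context prob_space
begin

lemma prob_Int_le_if_nested:
  assumes [measurable]: "A \<in> events" "B \<in> events" "A' \<in> events" "B' \<in> events"
    and "prob A' = prob A" and "prob B' = prob B"
    and "(AE \<omega> in M. \<omega> \<in> A' \<longrightarrow> \<omega> \<in> B') \<or> (AE \<omega> in M. \<omega> \<in> B' \<longrightarrow> \<omega> \<in> A')"
  shows "prob (A \<inter> B) \<le> prob (A' \<inter> B')"
  using assms(7)
proof
  assume "AE \<omega> in M. \<omega> \<in> A' \<longrightarrow> \<omega> \<in> B'"
  then have "prob (A' \<inter> B') = prob A'"
    by (intro finite_measure_eq_AE) auto
  then show ?thesis
    using assms(5) finite_measure_mono[of "A \<inter> B" A] by simp
next
  assume "AE \<omega> in M. \<omega> \<in> B' \<longrightarrow> \<omega> \<in> A'"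
  then have "prob (A' \<inter> B') = prob B'"
    by (intro finite_measure_eq_AE) auto
  then show ?thesis
    using assms(6) finite_measure_mono[of "A \<inter> B" B] by simp
qed

lemma prob_Int_ge_if_disjoint_or_covering:
  assumes [measurable]: "A \<in> events" "B \<in> events" "A' \<in> events" "B' \<in> events"
    and "prob A' = prob A" and "prob B' = prob B"
    and "(AE \<omega> in M. \<omega> \<notin> A' \<or> \<omega> \<notin> B') \<or> (AE \<omega> in M. \<omega> \<in> A' \<or> \<omega> \<in> B')"
  shows "prob (A' \<inter> B') \<le> prob (A \<inter> B)"
  using assms(7)
proof
  assume "AE \<omega> in M. \<omega> \<notin> A' \<or> \<omega> \<notin> B'"
  then have "prob (A' \<inter> B') = prob {}"
    by (intro finite_measure_eq_AE) auto
  then show ?thesis by simp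
next
  assume "AE \<omega> in M. \<omega> \<in> A' \<or> \<omega> \<in> B'"
  then have "prob (A' \<union> B') = 1"
    by (subst AE_in_set_eq_1[symmetric]) auto
  then have "prob (A' \<inter> B') = prob A + prob B - 1"
    using measure_Un3[of A' M B'] assms(5,6) by (simp add: fmeasurable_eq_sets)
  also have "\<dots> \<le> prob A + prob B - prob (A \<union> B)"
    by simp
  also have "\<dots> = prob (A \<inter> B)"
    using measure_Un3[of A M B] by (simp add: fmeasurable_eq_sets)
  finally show ?thesis .
qed

lemma prob_eq_if_distr_eq:
  assumes "X \<in> borel_measurable M" and "X' \<in> borel_measurable M"
    and "distr M borel X' = distr M borel X" and "A \<in> sets borel"
  shows "prob {\<omega>\<in>space M. X' \<omega> \<in> A} = prob {\<omega>\<in>space M. X \<omega> \<in> A}"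
  using measure_distr[OF assms(1,4)] measure_distr[OF assms(2,4)] assms(3)
  by (simp add: vimage_def Int_def conj_commute)

lemma joint_tail_le_comonotonic_version:
  fixes X Y X' Y' :: "'a \<Rightarrow> real"
  assumes [measurable]: "X \<in> borel_measurable M" "Y \<in> borel_measurable M"
    and "comonotonic_version M X Y X' Y'"
  shows "prob {\<omega>\<in>space M. t < X \<omega> \<and> s \<le> Y \<omega>} \<le> prob {\<omega>\<in>space M. t < X' \<omega> \<and> s \<le> Y' \<omega>}"
proof -
  have [measurable]: "X' \<in> borel_measurable M" "Y' \<in> borel_measurable M"
    and X': "distr M borel X' = distr M borel X" and Y': "distr M borel Y' = distr M borel Y"
    and "comonotonic M X' Y'"
    using assms(3) by (auto simp: comonotonic_version_def)
  then obtain Z :: "'a \<Rightarrow> real" and f g where "mono f" "mono g"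
    and repr: "AE \<omega> in M. X' \<omega> = f (Z \<omega>) \<and> Y' \<omega> = g (Z \<omega>)"
    by (auto simp: comonotonic_def)
  then have "mono (\<lambda>z. t < f z)" "mono (\<lambda>z. s \<le> g z)"
    by (auto simp: mono_def le_fun_def intro: less_le_trans order_trans)
  then consider "\<forall>z. t < f z \<longrightarrow> s \<le> g z" | "\<forall>z. s \<le> g z \<longrightarrow> t < f z"
    using mono_predicates_nested by blast
  then have nested: "(AE \<omega> in M. t < X' \<omega> \<longrightarrow> s \<le> Y' \<omega>) \<or> (AE \<omega> in M. s \<le> Y' \<omega> \<longrightarrow> t < X' \<omega>)"
  proof cases
    case 1
    from repr have "AE \<omega> in M. t < X' \<omega> \<longrightarrow> s \<le> Y' \<omega>"
      by eventually_elim (use 1 in auto)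
    then show ?thesis ..
  next
    case 2
    from repr have "AE \<omega> in M. s \<le> Y' \<omega> \<longrightarrow> t < X' \<omega>"
      by eventually_elim (use 2 in auto)
    then show ?thesis ..
  qed
  have "prob ({\<omega>\<in>space M. t < X \<omega>} \<inter> {\<omega>\<in>space M. s \<le> Y \<omega>})
      \<le> prob ({\<omega>\<in>space M. t < X' \<omega>} \<inter> {\<omega>\<in>space M. s \<le> Y' \<omega>})"
    using prob_eq_if_distr_eq[OF _ _ X', of "{t<..}"] prob_eq_if_distr_eq[OF _ _ Y', of "{s..}"] nested
    by (intro prob_Int_le_if_nested) auto
  moreover have "{\<omega>\<in>space M. t < X \<omega>} \<inter> {\<omega>\<in>space M. s \<le> Y \<omega>} = {\<omega>\<in>space M. t < X \<omega> \<and> s \<le> Y \<omega>}"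
    for X Y :: "'a \<Rightarrow> real"
    by auto
  ultimately show ?thesis
    by simp
qed

lemma counter_monotonic_version_joint_tail_le:
  fixes X Y X' Y' :: "'a \<Rightarrow> real"
  assumes [measurable]: "X \<in> borel_measurable M" "Y \<in> borel_measurable M"
    and "counter_monotonic_version M X Y X' Y'"
  shows "prob {\<omega>\<in>space M. t < X' \<omega> \<and> s \<le> Y' \<omega>} \<le> prob {\<omega>\<in>space M. t < X \<omega> \<and> s \<le> Y \<omega>}"
proof -
  have [measurable]: "X' \<in> borel_measurable M" "Y' \<in> borel_measurable M"
    and X': "distr M borel X' = distr M borel X" and Y': "distr M borel Y' = distr M borel Y"
    and "counter_monotonic M X' Y'"
    using assms(3) by (auto simp: counter_monotonic_version_def)
  then obtain Z :: "'a \<Rightarrow> real" and f g where "mono f" "mono g"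
    and repr: "AE \<omega> in M. X' \<omega> = f (Z \<omega>) \<and> - Y' \<omega> = g (Z \<omega>)"
    by (auto simp: counter_monotonic_def comonotonic_def)
  then have "mono (\<lambda>z. t < f z)" "mono (\<lambda>z. - s < g z)"
    by (auto simp: mono_def le_fun_def intro: less_le_trans)
  then consider "\<forall>z. t < f z \<longrightarrow> - s < g z" | "\<forall>z. - s < g z \<longrightarrow> t < f z"
    using mono_predicates_nested by blast
  then have disjoint_or_covering:
    "(AE \<omega> in M. \<not> t < X' \<omega> \<or> \<not> s \<le> Y' \<omega>) \<or> (AE \<omega> in M. t < X' \<omega> \<or> s \<le> Y' \<omega>)"
  proof cases
    case 1
    from repr have "AE \<omega> in M. \<not> t < X' \<omega> \<or> \<not> s \<le> Y' \<omega>"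
      by eventually_elim (use 1 in force)
    then show ?thesis ..
  next
    case 2
    from repr have "AE \<omega> in M. t < X' \<omega> \<or> s \<le> Y' \<omega>"
      by eventually_elim (use 2 in force)
    then show ?thesis ..
  qed
  have "prob ({\<omega>\<in>space M. t < X' \<omega>} \<inter> {\<omega>\<in>space M. s \<le> Y' \<omega>})
      \<le> prob ({\<omega>\<in>space M. t < X \<omega>} \<inter> {\<omega>\<in>space M. s \<le> Y \<omega>})"
    using prob_eq_if_distr_eq[OF _ _ X', of "{t<..}"] prob_eq_if_distr_eq[OF _ _ Y', of "{s..}"]
      disjoint_or_covering
    by (intro prob_Int_ge_if_disjoint_or_covering) auto
  moreover have "{\<omega>\<in>space M. t < X \<omega>} \<inter> {\<omega>\<in>space M. s \<le> Y \<omega>} = {\<omega>\<in>space M. t < X \<omega> \<and> s \<le> Y \<omega>}"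
    for X Y :: "'a \<Rightarrow> real"
    by auto
  ultimately show ?thesis
    by simp
qed

lemma stop_loss_le_comonotonic_version:
  assumes "X \<in> borel_measurable M" "Y \<in> borel_measurable M"
    and "comonotonic_version M X Y X' Y'"
  shows "stop_loss M (\<lambda>\<omega>. X \<omega> + Y \<omega>) d \<le> stop_loss M (\<lambda>\<omega>. X' \<omega> + Y' \<omega>) d"
  using assms joint_tail_le_comonotonic_version[OF assms]
  by (simp add: stop_loss_add_eq_integral_joint_tail comonotonic_version_def emeasure_eq_measure
      nn_integral_mono)

lemma counter_monotonic_version_stop_loss_le:
  assumes "X \<in> borel_measurable M" "Y \<in> borel_measurable M"
    and "counter_monotonic_version M X Y X' Y'"
  shows "stop_loss M (\<lambda>\<omega>. X' \<omega> + Y' \<omega>) d \<le> stop_loss M (\<lambda>\<omega>. X \<omega> + Y \<omega>) d"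
  using assms counter_monotonic_version_joint_tail_le[OF assms]
  by (simp add: stop_loss_add_eq_integral_joint_tail counter_monotonic_version_def emeasure_eq_measure
      nn_integral_mono)

lemma cx_le_comonotonic_version:
  assumes "X \<in> borel_measurable M" "Y \<in> borel_measurable M"
    and "comonotonic_version M X Y X' Y'"
  shows "cx_le M (\<lambda>\<omega>. X \<omega> + Y \<omega>) M (\<lambda>\<omega>. X' \<omega> + Y' \<omega>)"
proof (rule cx_le_if_stop_loss_le)
  show "stop_loss M (\<lambda>\<omega>. X \<omega> + Y \<omega>) d \<le> stop_loss M (\<lambda>\<omega>. X' \<omega> + Y' \<omega>) d" for d
    using assms by (rule stop_loss_le_comonotonic_version)
  show "stop_loss M (\<lambda>\<omega>. - (X \<omega> + Y \<omega>)) d \<le> stop_loss M (\<lambda>\<omega>. - (X' \<omega> + Y' \<omega>)) d" for d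
    using stop_loss_le_comonotonic_version[OF _ _ comonotonic_version_uminus[OF assms]] assms(1,2)
    by simp
qed (use assms in \<open>auto simp: comonotonic_version_def\<close>)

lemma counter_monotonic_version_cx_le:
  assumes "X \<in> borel_measurable M" "Y \<in> borel_measurable M"
    and "counter_monotonic_version M X Y X' Y'"
  shows "cx_le M (\<lambda>\<omega>. X' \<omega> + Y' \<omega>) M (\<lambda>\<omega>. X \<omega> + Y \<omega>)"
proof (rule cx_le_if_stop_loss_le)
  show "stop_loss M (\<lambda>\<omega>. X' \<omega> + Y' \<omega>) d \<le> stop_loss M (\<lambda>\<omega>. X \<omega> + Y \<omega>) d" for d
    using assms by (rule counter_monotonic_version_stop_loss_le)
  show "stop_loss M (\<lambda>\<omega>. - (X' \<omega> + Y' \<omega>)) d \<le> stop_loss M (\<lambda>\<omega>. - (X \<omega> + Y \<omega>)) d" for d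
    using counter_monotonic_version_stop_loss_le[OF _ _ counter_monotonic_version_uminus[OF assms]] assms(1,2)
    by simp
qed (use assms in \<open>auto simp: counter_monotonic_version_def\<close>)

end

theorem theorem3:
  fixes M :: "'a measure" and X Y Xco Yco Xct Yct :: "'a \<Rightarrow> real"
  assumes "prob_space M" and "atomless M"
    and "X \<in> borel_measurable M" and "Y \<in> borel_measurable M"
    and "comonotonic_version M X Y Xco Yco"
    and "counter_monotonic_version M X Y Xct Yct"
  shows "cx_le M (\<lambda>w. Xct w + Yct w) M (\<lambda>w. X w + Y w)
       \<and> cx_le M (\<lambda>w. X w + Y w) M (\<lambda>w. Xco w + Yco w)"
  using prob_space.counter_monotonic_version_cx_le[OF assms(1,3,4,6)]
    prob_space.cx_le_comonotonic_version[OF assms(1,3,4,5)]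
  by blast

end
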